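(* Assume the Rainbow Conjecture (RC) stated in the context holds. Then every finite digraph $H$ with no loops and no digons has a vertex $v$ with $|N^+_2(v)| \geq |N^+(v)|$.
   Context: All digraphs are finite. A digon is a pair of edges $(u,v),(v,u)$. For a vertex $v$ of a digraph, $N^+(v)$ is the set of vertices at directed out-distance exactly $1$ from $v$, and $N^+_2(v)$ is the set of vertices at directed out-distance exactly $2$ from $v$ (distance $=$ length of a shortest directed path). Rainbow setting: let $G$ be a finite digraph on vertex set $V$ with no loops and no parallel edges (digons allowed), let $k \geq 1$ and $E_1,\dots,E_k \subseteq E(G)$. Each edge $e$ gets the label set $S_e=\{i : e \in E_i\}$, and $G_i=(V,E_i)$. A directed path or directed cycle $P$ in $G$ is rainbow if there is an injective map $\ell: E(P)\to\{1,\dots,k\}$ with $\ell(e)\in S_e$ for every $e \in E(P)$. The Rainbow Conjecture (RC) asserts: for every such $G$, $k$ and $E_1,\dots,E_k$, either $G$ contains a rainbow directed cycle, or there is a vertex $v$ such that the number of vertices $w \neq v$ for which there is a rainbow directed path from $v$ to $w$ is at least $\sum_{i=1}^k \delta^+_{G_i}(v)$, where $\delta^+_{G_i}(v)$ is the out-degree of $v$ in $G_i$. *)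

theory Defs
  imports Main
begin

text \<open>A finite digraph: finite vertex set V, edge set E \<subseteq> V \<times> V, no loops.
  Parallel edges are impossible since E is a set; digons are allowed.\<close>
definition digraph :: "'a set \<Rightarrow> ('a \<times> 'a) set \<Rightarrow> bool" where
  "digraph V E \<longleftrightarrow> finite V \<and> E \<subseteq> V \<times> V \<and> (\<forall>u. (u, u) \<notin> E)"

definition rainbow_path ::
  "('a \<times> 'a) set \<Rightarrow> nat \<Rightarrow> (nat \<Rightarrow> ('a \<times> 'a) set) \<Rightarrow> 'a \<Rightarrow> 'a \<Rightarrow> bool" where
  "rainbow_path E k Es v w \<longleftrightarrow>
     (\<exists>ps. length ps \<ge> 2 \<and> hd ps = v \<and> last ps = w \<and> distinct ps \<and>
        (\<forall>i < length ps - 1. (ps ! i, ps ! Suc i) \<in> E) \<and>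
        (\<exists>l. inj_on l {..<length ps - 1} \<and>
             (\<forall>i < length ps - 1. l i \<in> {1..k} \<and> (ps ! i, ps ! Suc i) \<in> Es (l i))))"

text \<open>Rainbow directed cycle: distinct vertices cs = [c0, ..., c(n-1)], n \<ge> 2
  (digons count as cycles of length 2), edges (c i, c ((i+1) mod n)) in E,
  with an injective admissible labelling of its n edges.\<close>
definition rainbow_cycle ::
  "('a \<times> 'a) set \<Rightarrow> nat \<Rightarrow> (nat \<Rightarrow> ('a \<times> 'a) set) \<Rightarrow> bool" where
  "rainbow_cycle E k Es \<longleftrightarrow>
     (\<exists>cs. length cs \<ge> 2 \<and> distinct cs \<and>
        (\<forall>i < length cs. (cs ! i, cs ! ((i + 1) mod length cs)) \<in> E) \<and>
        (\<exists>l. inj_on l {..<length cs} \<and>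
             (\<forall>i < length cs. l i \<in> {1..k} \<and>
                 (cs ! i, cs ! ((i + 1) mod length cs)) \<in> Es (l i))))"

definition outdeg :: "('a \<times> 'a) set \<Rightarrow> 'a \<Rightarrow> nat" where
  "outdeg F v = card {w. (v, w) \<in> F}"

definition RC_on :: "'v itself \<Rightarrow> bool" where
  "RC_on _ \<longleftrightarrow>
     (\<forall>(V :: 'v set) E k Es.
        digraph V E \<and> V \<noteq> {} \<and> k \<ge> 1 \<and> (\<forall>i \<in> {1..k}. Es i \<subseteq> E) \<longrightarrow>
        rainbow_cycle E k Es \<or>
        (\<exists>v \<in> V. card {w \<in> V. w \<noteq> v \<and> rainbow_path E k Es v w}
                    \<ge> (\<Sum>i = 1..k. outdeg (Es i) v)))"

definition out_nbhd :: "('a \<times> 'a) set \<Rightarrow> 'a \<Rightarrow> 'a set" where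
  "out_nbhd E v = {w. w \<noteq> v \<and> (v, w) \<in> E}"

definition second_out_nbhd :: "('a \<times> 'a) set \<Rightarrow> 'a \<Rightarrow> 'a set" where
  "second_out_nbhd E v =
     {w. w \<noteq> v \<and> (v, w) \<notin> E \<and> (\<exists>u. (v, u) \<in> E \<and> (u, w) \<in> E)}"

end

theory Submission
  imports Defs
begin

text \<open>Apply RC to H = (V, E) with k = 2 and E1 = E2 = E. A rainbow path or cycle then has
  at most two edges, so the absence of digons rules out rainbow cycles, and every vertex
  rainbow-reachable from v lies in N1(v) \<union> N2(v), the union of the first and second
  out-neighbourhoods. RC therefore yields a vertex v with |N1(v)| + |N2(v)| \<ge> 2 |N1(v)|.
  Since RC is assumed for vertices in nat only, H is first copied to nat along an injection.\<close>

lemma inj_on_lessThan_le_of_labels: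
  fixes l :: "nat \<Rightarrow> nat"
  assumes "inj_on l {..<n}" and "\<forall>i<n. l i \<in> {1..k}"
  shows "n \<le> k"
proof -
  have "card {..<n} \<le> card {1..k}"
    using assms by (intro card_inj_on_le) auto
  then show ?thesis by simp
qed

lemma rainbow_cycle_two_imp_digon:
  assumes "rainbow_cycle E 2 Es"
  shows "\<exists>u v. (u, v) \<in> E \<and> (v, u) \<in> E"
proof -
  obtain cs and l :: "nat \<Rightarrow> nat" where len: "length cs \<ge> 2"
    and edges: "\<forall>i < length cs. (cs ! i, cs ! ((i + 1) mod length cs)) \<in> E"
    and "inj_on l {..<length cs}" and "\<forall>i < length cs. l i \<in> {1..2}"
    using assms unfolding rainbow_cycle_def by blast
  then have "length cs = 2"
    using inj_on_lessThan_le_of_labels len by (metis le_antisym)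
  then have "(cs ! 0, cs ! 1) \<in> E" and "(cs ! 1, cs ! 0) \<in> E"
    using edges[rule_format, of 0] edges[rule_format, of 1] by simp_all
  then show ?thesis by blast
qed

lemma rainbow_path_two_reaches:
  assumes "rainbow_path E 2 Es v w"
  shows "w \<in> out_nbhd E v \<union> second_out_nbhd E v"
proof -
  obtain ps and l :: "nat \<Rightarrow> nat" where len: "length ps \<ge> 2" and hd_ps: "hd ps = v"
    and last_ps: "last ps = w" and dist: "distinct ps"
    and edges: "\<forall>i < length ps - 1. (ps ! i, ps ! Suc i) \<in> E"
    and "inj_on l {..<length ps - 1}" and "\<forall>i < length ps - 1. l i \<in> {1..2}"
    using assms unfolding rainbow_path_def by blast
  then have "length ps - 1 \<le> 2"
    using inj_on_lessThan_le_of_labels by blast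
  with len consider "length ps = 2" | "length ps = 3" by linarith
  then show ?thesis
  proof cases
    case 1
    then obtain a b where "ps = [a, b]"
      by (metis (no_types) length_0_conv length_Suc_conv numeral_2_eq_2)
    with hd_ps last_ps dist edges show ?thesis
      by (auto simp: out_nbhd_def)
  next
    case 2
    then obtain a b c where "ps = [a, b, c]"
      by (metis (no_types) length_0_conv length_Suc_conv numeral_3_eq_3)
    with hd_ps last_ps dist edges[rule_format, of 0] edges[rule_format, of 1] show ?thesis
      by (auto simp: out_nbhd_def second_out_nbhd_def)
  qed
qed

lemma outdeg_eq_card_out_nbhd:
  assumes "(v, v) \<notin> E"
  shows "outdeg E v = card (out_nbhd E v)"
proof -
  have "{w. (v, w) \<in> E} = out_nbhd E v"
    using assms by (auto simp: out_nbhd_def)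
  then show ?thesis by (simp add: outdeg_def)
qed

lemma RC_imp_second_out_nbhd_ge_out_nbhd:
  fixes V :: "'v set"
  assumes RC: "RC_on TYPE('v)" and H: "digraph V E" and "V \<noteq> {}"
    and no_digons: "\<forall>u v. (u, v) \<in> E \<longrightarrow> (v, u) \<notin> E"
  shows "\<exists>v \<in> V. card (second_out_nbhd E v) \<ge> card (out_nbhd E v)"
proof -
  have "\<not> rainbow_cycle E 2 (\<lambda>_. E)"
    using rainbow_cycle_two_imp_digon no_digons by blast
  moreover have "rainbow_cycle E 2 (\<lambda>_. E) \<or>
      (\<exists>v \<in> V. card {w \<in> V. w \<noteq> v \<and> rainbow_path E 2 (\<lambda>_. E) v w}
                  \<ge> (\<Sum>i = 1..(2::nat). outdeg E v))"
    using RC[unfolded RC_on_def, rule_format, of V E 2 "\<lambda>_. E"] H \<open>V \<noteq> {}\<close> by simp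
  ultimately obtain v where "v \<in> V"
    and RC_v: "card {w \<in> V. w \<noteq> v \<and> rainbow_path E 2 (\<lambda>_. E) v w}
                 \<ge> (\<Sum>i = 1..(2::nat). outdeg E v)"
    by blast
  have "finite V" and "E \<subseteq> V \<times> V" and "(v, v) \<notin> E"
    using H unfolding digraph_def by auto
  have "out_nbhd E v \<union> second_out_nbhd E v \<subseteq> V"
    using \<open>E \<subseteq> V \<times> V\<close> by (auto simp: out_nbhd_def second_out_nbhd_def)
  then have fin: "finite (out_nbhd E v \<union> second_out_nbhd E v)"
    using \<open>finite V\<close> by (rule finite_subset)
  have "2 * card (out_nbhd E v) = (\<Sum>i = 1..(2::nat). outdeg E v)"
    using outdeg_eq_card_out_nbhd[OF \<open>(v, v) \<notin> E\<close>] by simp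
  also have "\<dots> \<le> card {w \<in> V. w \<noteq> v \<and> rainbow_path E 2 (\<lambda>_. E) v w}"
    by (fact RC_v)
  also have "\<dots> \<le> card (out_nbhd E v \<union> second_out_nbhd E v)"
    using fin by (intro card_mono) (auto dest: rainbow_path_two_reaches)
  also have "\<dots> \<le> card (out_nbhd E v) + card (second_out_nbhd E v)"
    by (fact card_Un_le)
  finally show ?thesis using \<open>v \<in> V\<close> by auto
qed

lemma map_prod_image_mem_iff:
  assumes "inj_on f V" and "E \<subseteq> V \<times> V" and "x \<in> V" and "y \<in> V"
  shows "(f x, f y) \<in> map_prod f f ` E \<longleftrightarrow> (x, y) \<in> E"
proof
  assume "(f x, f y) \<in> map_prod f f ` E"
  then obtain x' y' where "(x', y') \<in> E" and "f x' = f x" and "f y' = f y"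
    by auto
  with assms show "(x, y) \<in> E"
    by (metis inj_on_eq_iff mem_Sigma_iff subsetD)
qed auto

lemma digraph_image:
  assumes f: "inj_on f V" and H: "digraph V E"
  shows "digraph (f ` V) (map_prod f f ` E)"
proof -
  have "(u, u) \<notin> map_prod f f ` E" for u
  proof
    assume "(u, u) \<in> map_prod f f ` E"
    then obtain x y where "(x, y) \<in> E" and "f x = f y"
      by auto
    with f H show False
      unfolding digraph_def by (metis inj_onD mem_Sigma_iff subsetD)
  qed
  with H show ?thesis
    by (auto simp: digraph_def)
qed

lemma no_digons_image:
  assumes f: "inj_on f V" and EV: "E \<subseteq> V \<times> V"
    and no_digons: "\<forall>u v. (u, v) \<in> E \<longrightarrow> (v, u) \<notin> E"
  shows "\<forall>u v. (u, v) \<in> map_prod f f ` E \<longrightarrow> (v, u) \<notin> map_prod f f ` E"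
proof (intro allI impI)
  fix u v
  assume "(u, v) \<in> map_prod f f ` E"
  then obtain x y where "(x, y) \<in> E" "u = f x" "v = f y"
    by auto
  moreover from this EV have "x \<in> V" "y \<in> V"
    by auto
  ultimately show "(v, u) \<notin> map_prod f f ` E"
    using no_digons map_prod_image_mem_iff[OF f EV] by simp
qed

lemma out_nbhd_image:
  assumes "inj_on f V" and "E \<subseteq> V \<times> V" and "v \<in> V"
  shows "out_nbhd (map_prod f f ` E) (f v) = f ` out_nbhd E v"
proof -
  have "out_nbhd (map_prod f f ` E) (f v) \<subseteq> f ` V" and "out_nbhd E v \<subseteq> V"
    using assms(2) by (auto simp: out_nbhd_def)
  then show ?thesis
    using assms by (auto simp: out_nbhd_def map_prod_image_mem_iff inj_on_eq_iff)
qed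

lemma second_out_nbhd_image:
  assumes f: "inj_on f V" and EV: "E \<subseteq> V \<times> V" and "v \<in> V"
  shows "second_out_nbhd (map_prod f f ` E) (f v) = f ` second_out_nbhd E v"
proof (intro equalityI subsetI)
  fix w
  assume "w \<in> second_out_nbhd (map_prod f f ` E) (f v)"
  then obtain u where w: "w \<noteq> f v" "(f v, w) \<notin> map_prod f f ` E"
    and u: "(f v, u) \<in> map_prod f f ` E" "(u, w) \<in> map_prod f f ` E"
    unfolding second_out_nbhd_def mem_Collect_eq by metis
  from u EV obtain x y where "x \<in> V" "y \<in> V" "u = f x" "w = f y"
    by blast
  with w u assms show "w \<in> f ` second_out_nbhd E v"
    by (auto simp: second_out_nbhd_def map_prod_image_mem_iff)
next
  fix w
  assume "w \<in> f ` second_out_nbhd E v"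
  then obtain y u where "w = f y" "y \<noteq> v" "(v, y) \<notin> E" "(v, u) \<in> E" "(u, y) \<in> E"
    unfolding second_out_nbhd_def by blast
  moreover from this EV have "y \<in> V" "u \<in> V"
    by auto
  moreover have "(f v, f u) \<in> map_prod f f ` E" "(f u, f y) \<in> map_prod f f ` E"
    using \<open>(v, u) \<in> E\<close> \<open>(u, y) \<in> E\<close> by force+
  ultimately show "w \<in> second_out_nbhd (map_prod f f ` E) (f v)"
    using assms unfolding second_out_nbhd_def
    by (auto simp: map_prod_image_mem_iff inj_on_eq_iff)
qed

theorem mainTheorem1:
  fixes V :: "'a set" and E :: "('a \<times> 'a) set"
  assumes RC: "RC_on TYPE(nat)"
    and H: "digraph V E" and nonempty: "V \<noteq> {}"
    and no_digons: "\<forall>u v. (u, v) \<in> E \<longrightarrow> (v, u) \<notin> E"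
  shows "\<exists>v \<in> V. card (second_out_nbhd E v) \<ge> card (out_nbhd E v)"
proof -
  have "finite V" and EV: "E \<subseteq> V \<times> V"
    using H unfolding digraph_def by auto
  then obtain f :: "'a \<Rightarrow> nat" where f: "inj_on f V"
    using finite_imp_inj_to_nat_seg by blast
  obtain v where "v \<in> V"
    and "card (out_nbhd (map_prod f f ` E) (f v)) \<le> card (second_out_nbhd (map_prod f f ` E) (f v))"
    using RC_imp_second_out_nbhd_ge_out_nbhd[OF RC digraph_image[OF f H]]
      no_digons_image[OF f EV no_digons] nonempty
    by blast
  moreover have "out_nbhd E v \<subseteq> V" and "second_out_nbhd E v \<subseteq> V"
    using EV by (auto simp: out_nbhd_def second_out_nbhd_def)
  ultimately show ?thesis
    using out_nbhd_image[OF f EV] second_out_nbhd_image[OF f EV]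
    by (auto simp: card_image inj_on_subset[OF f])
qed

end
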